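(* Let $a_2,a_3$ be integers with $1<a_2<a_3$, $A=\{1,a_2,a_3\}$, and let $SG(A,n,p)$ be a stride generator. Then there exists an integer $x$ with $a_3-a_2\le x<a_3$ which has no $n$-generation of order $<p$ (i.e. $x$ is covered only by threads of order $p$ among threads of order $\le p$).
   Context: For integers $n$ and $i\ge 0$, an integer $x$ has an $n$-generation of order $i$ if there are integers $c_1,c_2\ge 0$ with $x+ia_3=c_2a_2+c_1$ and $c_1+c_2\le n+i$. For integers $n$ and $p\ge0$, $SG(A,n,p)$ is a stride generator if: (A) every integer $0\le x<a_3$ has an $n$-generation of some order $\le p$; (B) at least one integer $0\le x<a_3$ has no $n$-generation of order $<p$; (C) at least one integer $0\le y<a_3$ has no $(n-1)$-generation of any order $\le p+1$. A thread of order $i$ is an integer interval $[ea_2-ia_3,\, ea_2-ia_3+(n+i)-e]$ with integers $e\ge0$, $n+i-e\ge0$; $x$ has an $n$-generation of order $i$ iff $x$ lies in some thread of order $i$. *)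

theory Defs
  imports Main
begin

definition has_gen :: "int \<Rightarrow> int \<Rightarrow> int \<Rightarrow> nat \<Rightarrow> int \<Rightarrow> bool" where
  "has_gen a2 a3 n i x \<longleftrightarrow>
     (\<exists>c1 c2::int. c1 \<ge> 0 \<and> c2 \<ge> 0 \<and> x + int i * a3 = c2 * a2 + c1 \<and> c1 + c2 \<le> n + int i)"

definition stride_generator :: "int \<Rightarrow> int \<Rightarrow> int \<Rightarrow> nat \<Rightarrow> bool" where
  "stride_generator a2 a3 n p \<longleftrightarrow>
     (\<forall>x. 0 \<le> x \<and> x < a3 \<longrightarrow> (\<exists>i\<le>p. has_gen a2 a3 n i x)) \<and>
     (\<exists>x. 0 \<le> x \<and> x < a3 \<and> \<not> (\<exists>i<p. has_gen a2 a3 n i x)) \<and>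
     (\<exists>y. 0 \<le> y \<and> y < a3 \<and> \<not> (\<exists>i\<le>p + 1. has_gen a2 a3 (n - 1) i y))"

end

theory Submission
  imports Defs
begin

text \<open>A generation of x + a2 either uses a2 at least once, which can be dropped, or consists
  of ones only, of which a2 can be dropped since x \<ge> 0. So having a generation of order i is
  inherited downwards along strides of a2, and an ungenerated x can be pushed up by multiples of a2
  into the window [a3 - a2, a3) while staying ungenerated.\<close>

lemma has_gen_minus_stride:
  assumes "has_gen a2 a3 n i (x + a2)" and "0 \<le> x" "0 \<le> a2" "0 \<le> a3"
  shows "has_gen a2 a3 n i x"
proof -
  from assms(1) obtain c1 c2 where
    c: "c1 \<ge> 0" "c2 \<ge> 0" "x + a2 + int i * a3 = c2 * a2 + c1" "c1 + c2 \<le> n + int i"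
    unfolding has_gen_def by blast
  show ?thesis
  proof (cases "c2 = 0")
    case True
    have "0 \<le> int i * a3" using \<open>0 \<le> a3\<close> by simp
    with c True assms(2,3) show ?thesis
      unfolding has_gen_def by (intro exI[of _ "c1 - a2"] exI[of _ 0]) auto
  next
    case False
    with c show ?thesis
      unfolding has_gen_def by (intro exI[of _ c1] exI[of _ "c2 - 1"]) (auto simp: algebra_simps)
  qed
qed

lemma has_gen_minus_strides:
  assumes "has_gen a2 a3 n i (x + int k * a2)" and "0 \<le> x" "0 \<le> a2" "0 \<le> a3"
  shows "has_gen a2 a3 n i x"
  using assms(1)
proof (induction k)
  case (Suc k)
  have "0 \<le> x + int k * a2" using assms(2,3) by simp
  with Suc.prems have "has_gen a2 a3 n i (x + int k * a2)"
    using has_gen_minus_stride[OF _ _ assms(3,4)] by (simp add: algebra_simps)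
  then show ?case by (rule Suc.IH)
qed simp

lemma stride_into_top_window:
  fixes x a2 a3 :: int
  assumes "0 < a2" "x < a3"
  obtains k :: nat where "a3 - a2 \<le> x + int k * a2" "x + int k * a2 < a3"
proof
  let ?q = "(a3 - 1 - x) div a2" and ?r = "(a3 - 1 - x) mod a2"
  have q: "int (nat ?q) = ?q" using assms by (simp add: pos_imp_zdiv_nonneg_iff)
  have "a3 - 1 - x = ?q * a2 + ?r" by simp
  moreover have "0 \<le> ?r" "?r < a2" using \<open>0 < a2\<close> by simp_all
  ultimately show "a3 - a2 \<le> x + int (nat ?q) * a2" "x + int (nat ?q) * a2 < a3"
    unfolding q by linarith+
qed

theorem lemma2:
  fixes a2 a3 n :: int and p :: nat
  assumes "1 < a2" and "a2 < a3"
    and "stride_generator a2 a3 n p"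
  shows "\<exists>x. a3 - a2 \<le> x \<and> x < a3 \<and> \<not> (\<exists>i<p. has_gen a2 a3 n i x)"
proof -
  from assms(3) obtain x where x: "0 \<le> x" "x < a3" "\<not> (\<exists>i<p. has_gen a2 a3 n i x)"
    unfolding stride_generator_def by blast
  obtain k where window: "a3 - a2 \<le> x + int k * a2" "x + int k * a2 < a3"
    using stride_into_top_window[of a2 x a3] \<open>1 < a2\<close> \<open>x < a3\<close> by auto
  have "\<not> (\<exists>i<p. has_gen a2 a3 n i (x + int k * a2))"
    using x has_gen_minus_strides[of a2 a3 n _ x k] assms(1,2) by auto
  with window show ?thesis by blast
qed

end
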